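(* Let $q$ be a prime power, $m,n$ positive integers and $0\le v\le n$. For every elementary linear subspace $\mathcal V$ of $\mathrm{GF}(q^m)^n$ of dimension $v$, the rank diameter satisfies $\delta(\mathcal V)\le v$. Moreover, if $v\le m$, then $\delta(\mathcal V)=v$.
   Context: For $\mathbf x=(x_0,\dots,x_{n-1})\in\mathrm{GF}(q^m)^n$, $\mathrm{rk}(\mathbf x)$ is the dimension over $\mathrm{GF}(q)$ of the $\mathrm{GF}(q)$-span of $x_0,\dots,x_{n-1}$. A linear subspace of the $\mathrm{GF}(q^m)$-vector space $\mathrm{GF}(q^m)^n$ is elementary if it has a basis consisting of vectors in $\mathrm{GF}(q)^n$. The rank diameter of a linear subspace $\mathcal L$ is $\delta(\mathcal L)=\max_{\mathbf x\in\mathcal L}\mathrm{rk}(\mathbf x)$. *)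

theory Defs
  imports "HOL-Analysis.Analysis" "HOL-Computational_Algebra.Primes"
begin

text \<open>A subfield F of a field 'k (here: GF(q) inside GF(q^m)).\<close>
definition is_subfield :: "'k::field set \<Rightarrow> bool" where
  "is_subfield F \<longleftrightarrow> 0 \<in> F \<and> 1 \<in> F \<and>
     (\<forall>a\<in>F. \<forall>b\<in>F. a + b \<in> F \<and> a * b \<in> F) \<and>
     (\<forall>a\<in>F. - a \<in> F) \<and> (\<forall>a\<in>F. a \<noteq> 0 \<longrightarrow> inverse a \<in> F)"

definition F_indep :: "'k::field set \<Rightarrow> 'k set \<Rightarrow> bool" where
  "F_indep F B \<longleftrightarrow> finite B \<and>
     (\<forall>c. (\<forall>b\<in>B. c b \<in> F) \<longrightarrow> (\<Sum>b\<in>B. c b * b) = 0 \<longrightarrow> (\<forall>b\<in>B. c b = 0))"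

definition F_span :: "'k::field set \<Rightarrow> 'k set \<Rightarrow> 'k set" where
  "F_span F S = {(\<Sum>s\<in>T. c s * s) | T c. finite T \<and> T \<subseteq> S \<and> (\<forall>s\<in>T. c s \<in> F)}"

definition F_dim :: "'k::field set \<Rightarrow> 'k set \<Rightarrow> nat" where
  "F_dim F W = Max {card B | B. B \<subseteq> W \<and> F_indep F B}"

definition rk :: "'k::field set \<Rightarrow> 'k ^ 'n \<Rightarrow> nat" where
  "rk F x = F_dim F (F_span F (range (\<lambda>i. x $ i)))"

definition elementary :: "'k::field set \<Rightarrow> ('k ^ 'n) set \<Rightarrow> bool" where
  "elementary F V \<longleftrightarrow> (\<exists>B. B \<subseteq> {x. \<forall>i. x $ i \<in> F} \<and> vec.independent B \<and> vec.span B = V)"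

definition rank_diameter :: "'k::field set \<Rightarrow> ('k ^ 'n) set \<Rightarrow> nat" where
  "rank_diameter F V = Max (rk F ` V)"

end

theory Submission
  imports Defs
begin

(* Write x in V as x = (SUM b:B. c b *s b) over a basis B of vectors with entries in F.
   Every coordinate of x is an F-combination of the c b, so rk x <= card B = v.
   Conversely, B has a dual basis with entries in F, so each c b is an F-combination of the
   coordinates of x; choosing the c b F-independent in GF(q^m), possible when v <= m, gives
   rk x = v.  Dimensions over F are computed by counting: an F-independent set D spans exactly
   card F ^ card D elements. *)

lemma subfield_zero: "is_subfield F \<Longrightarrow> 0 \<in> F"
  and subfield_one: "is_subfield F \<Longrightarrow> 1 \<in> F"
  and subfield_add: "is_subfield F \<Longrightarrow> a \<in> F \<Longrightarrow> b \<in> F \<Longrightarrow> a + b \<in> F"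
  and subfield_mult: "is_subfield F \<Longrightarrow> a \<in> F \<Longrightarrow> b \<in> F \<Longrightarrow> a * b \<in> F"
  and subfield_uminus: "is_subfield F \<Longrightarrow> a \<in> F \<Longrightarrow> - a \<in> F"
  by (simp_all add: is_subfield_def)

lemma subfield_diff: "is_subfield F \<Longrightarrow> a \<in> F \<Longrightarrow> b \<in> F \<Longrightarrow> a - b \<in> F"
  unfolding diff_conv_add_uminus by (intro subfield_add subfield_uminus)

lemma subfield_divide: "is_subfield F \<Longrightarrow> a \<in> F \<Longrightarrow> b \<in> F \<Longrightarrow> a / b \<in> F"
  by (cases "b = 0") (auto simp: is_subfield_def divide_inverse)

lemma subfield_sum: "is_subfield F \<Longrightarrow> (\<And>x. x \<in> A \<Longrightarrow> f x \<in> F) \<Longrightarrow> sum f A \<in> F"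
  by (induct A rule: infinite_finite_induct) (auto intro: subfield_zero subfield_add)

lemma card_subfield_ge_2:
  fixes F :: "'k::{field,finite} set"
  assumes "is_subfield F"
  shows "2 \<le> card F"
proof -
  have "{0, 1} \<subseteq> F" using assms by (simp add: subfield_zero subfield_one)
  then show ?thesis using card_mono[of F "{0, 1}"] by simp
qed

lemma F_indep_finite: "F_indep F D \<Longrightarrow> finite D"
  by (simp add: F_indep_def)

lemma F_indepD:
  "F_indep F D \<Longrightarrow> \<forall>b\<in>D. c b \<in> F \<Longrightarrow> (\<Sum>b\<in>D. c b * b) = 0 \<Longrightarrow> b \<in> D \<Longrightarrow> c b = 0"
  unfolding F_indep_def by blast

lemma F_indep_empty: "F_indep F {}"
  by (simp add: F_indep_def)

lemma F_indep_subset: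
  assumes F: "is_subfield F" and D: "F_indep F D" and "C \<subseteq> D"
  shows "F_indep F C"
  unfolding F_indep_def
proof (intro conjI allI impI ballI)
  show "finite C" using F_indep_finite[OF D] \<open>C \<subseteq> D\<close> by (rule finite_subset[rotated])
  fix c b assume c: "\<forall>b\<in>C. c b \<in> F" and sum_C: "(\<Sum>b\<in>C. c b * b) = 0" and "b \<in> C"
  let ?c = "\<lambda>b. if b \<in> C then c b else 0"
  have "(\<Sum>b\<in>D. ?c b * b) = (\<Sum>b\<in>D. if b \<in> C then c b * b else 0)"
    by (rule sum.cong) auto
  also have "\<dots> = (\<Sum>b\<in>D \<inter> C. c b * b)"
    using F_indep_finite[OF D] by (rule sum.inter_restrict[symmetric])
  also have "\<dots> = 0" using sum_C \<open>C \<subseteq> D\<close> by (simp add: Int_absorb1)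
  finally have "?c b = 0"
    using F_indepD[OF D, of ?c b] c \<open>b \<in> C\<close> \<open>C \<subseteq> D\<close> subfield_zero[OF F] by auto
  then show "c b = 0" using \<open>b \<in> C\<close> by simp
qed

lemma F_span_eq_image:
  assumes F: "is_subfield F" and "finite A"
  shows "F_span F A = (\<lambda>c. \<Sum>s\<in>A. c s * s) ` (A \<rightarrow>\<^sub>E F)"
proof (intro equalityI subsetI)
  fix y assume "y \<in> F_span F A"
  then obtain T c where y: "y = (\<Sum>s\<in>T. c s * s)" and "T \<subseteq> A" and c: "\<forall>s\<in>T. c s \<in> F"
    unfolding F_span_def by blast
  define c' where "c' = (\<lambda>s\<in>A. if s \<in> T then c s else 0)"
  have "c' \<in> A \<rightarrow>\<^sub>E F" using c subfield_zero[OF F] by (auto simp: c'_def)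
  moreover have "(\<Sum>s\<in>A. c' s * s) = y"
    using \<open>finite A\<close> \<open>T \<subseteq> A\<close>
    by (simp add: y c'_def if_distrib[of "\<lambda>x. x * _"] sum.inter_restrict[symmetric]
        Int_absorb1 cong: if_cong)
  ultimately show "y \<in> (\<lambda>c. \<Sum>s\<in>A. c s * s) ` (A \<rightarrow>\<^sub>E F)" by blast
next
  fix y assume "y \<in> (\<lambda>c. \<Sum>s\<in>A. c s * s) ` (A \<rightarrow>\<^sub>E F)"
  then show "y \<in> F_span F A" using \<open>finite A\<close> unfolding F_span_def by blast
qed

lemma F_span_sum_mem:
  "finite T \<Longrightarrow> T \<subseteq> A \<Longrightarrow> \<forall>s\<in>T. c s \<in> F \<Longrightarrow> (\<Sum>s\<in>T. c s * s) \<in> F_span F A"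
  unfolding F_span_def by blast

lemma F_span_superset: "is_subfield F \<Longrightarrow> A \<subseteq> F_span F A"
proof
  fix s assume "is_subfield F" "s \<in> A"
  then have "(\<Sum>t\<in>{s}. 1 * t) \<in> F_span F A"
    by (intro F_span_sum_mem) (auto simp: subfield_one)
  then show "s \<in> F_span F A" by simp
qed

lemma F_span_lincomb:
  assumes F: "is_subfield F" and "finite A" "finite I"
    and e: "\<forall>j\<in>I. e j \<in> F" and y: "\<forall>j\<in>I. y j \<in> F_span F A"
  shows "(\<Sum>j\<in>I. e j * y j) \<in> F_span F A"
proof -
  have "\<forall>j\<in>I. \<exists>c\<in>A \<rightarrow>\<^sub>E F. y j = (\<Sum>s\<in>A. c s * s)"
    using y by (auto simp: F_span_eq_image[OF F \<open>finite A\<close>])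
  then obtain c where c: "\<forall>j\<in>I. c j \<in> A \<rightarrow>\<^sub>E F \<and> y j = (\<Sum>s\<in>A. c j s * s)"
    by (metis (no_types) bchoice)
  have "(\<Sum>j\<in>I. e j * y j) = (\<Sum>j\<in>I. \<Sum>s\<in>A. e j * c j s * s)"
    using c by (intro sum.cong) (simp_all add: sum_distrib_left mult.assoc)
  also have "\<dots> = (\<Sum>s\<in>A. (\<Sum>j\<in>I. e j * c j s) * s)"
    by (subst sum.swap) (simp add: sum_distrib_right)
  also have "\<dots> \<in> F_span F A"
    using \<open>finite A\<close> c e
    by (intro F_span_sum_mem ballI subfield_sum[OF F] subfield_mult[OF F]) auto
  finally show ?thesis .
qed

lemma F_span_minimal:
  assumes F: "is_subfield F" and "finite A" and "S \<subseteq> F_span F A"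
  shows "F_span F S \<subseteq> F_span F A"
proof
  fix y assume "y \<in> F_span F S"
  then obtain T c where "y = (\<Sum>s\<in>T. c s * s)" "finite T" "T \<subseteq> S" "\<forall>s\<in>T. c s \<in> F"
    unfolding F_span_def by blast
  with assms show "y \<in> F_span F A" by (simp add: F_span_lincomb subset_iff)
qed

lemma inj_on_lincomb_if_F_indep:
  assumes F: "is_subfield F" and D: "F_indep F D"
  shows "inj_on (\<lambda>c. \<Sum>d\<in>D. c d * d) (D \<rightarrow>\<^sub>E F)"
proof (rule inj_onI)
  fix c1 c2 assume c1: "c1 \<in> D \<rightarrow>\<^sub>E F" and c2: "c2 \<in> D \<rightarrow>\<^sub>E F"
    and eq: "(\<Sum>d\<in>D. c1 d * d) = (\<Sum>d\<in>D. c2 d * d)"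
  have "(\<Sum>d\<in>D. (c1 d - c2 d) * d) = 0"
    using eq by (simp add: left_diff_distrib sum_subtractf)
  moreover have "\<forall>d\<in>D. c1 d - c2 d \<in> F" using c1 c2 subfield_diff[OF F] by auto
  ultimately have "c1 d - c2 d = 0" if "d \<in> D" for d
    using F_indepD[OF D, of "\<lambda>d. c1 d - c2 d", OF _ _ that] by blast
  then have "c1 d = c2 d" if "d \<in> D" for d
    using that by simp
  then show "c1 = c2" by (rule PiE_ext[OF c1 c2])
qed

lemma card_F_span_F_indep:
  assumes F: "is_subfield F" and D: "F_indep F D"
  shows "card (F_span F D) = card F ^ card D"
proof -
  have "finite D" by (rule F_indep_finite[OF D])
  then have "card (F_span F D) = card (D \<rightarrow>\<^sub>E F)"
    by (simp add: F_span_eq_image[OF F] card_image[OF inj_on_lincomb_if_F_indep[OF F D]])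
  with \<open>finite D\<close> show ?thesis by (simp add: card_PiE)
qed

lemma card_F_span_le:
  fixes F :: "'k::{field,finite} set"
  assumes F: "is_subfield F" and "finite A"
  shows "card (F_span F A) \<le> card F ^ card A"
proof -
  have "card (F_span F A) \<le> card (A \<rightarrow>\<^sub>E F)"
    unfolding F_span_eq_image[OF assms] by (rule card_image_le) simp
  with \<open>finite A\<close> show ?thesis by (simp add: card_PiE)
qed

lemma finite_card_F_indep_subsets:
  fixes F :: "'k::{field,finite} set"
  shows "finite {card B |B. B \<subseteq> W \<and> F_indep F B}"
  unfolding setcompr_eq_image by (rule finite_imageI) simp

lemma F_dim_le_card:
  fixes F :: "'k::{field,finite} set"
  assumes F: "is_subfield F" and "finite A" and W: "W \<subseteq> F_span F A"
  shows "F_dim F W \<le> card A"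
  unfolding F_dim_def
proof (rule Max.boundedI)
  show "finite {card B |B. B \<subseteq> W \<and> F_indep F B}" by (rule finite_card_F_indep_subsets)
  show "{card B |B. B \<subseteq> W \<and> F_indep F B} \<noteq> {}" using F_indep_empty by blast
next
  fix a assume "a \<in> {card B |B. B \<subseteq> W \<and> F_indep F B}"
  then obtain B where "a = card B" "B \<subseteq> W" and B: "F_indep F B" by blast
  have "card F ^ card B = card (F_span F B)" by (rule card_F_span_F_indep[OF F B, symmetric])
  also have "\<dots> \<le> card (F_span F A)"
    using \<open>B \<subseteq> W\<close> W by (intro card_mono F_span_minimal[OF F \<open>finite A\<close>]) auto
  also have "\<dots> \<le> card F ^ card A" by (rule card_F_span_le[OF F \<open>finite A\<close>])
  finally have "card F ^ card B \<le> card F ^ card A" .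
  then have "card B \<le> card A"
    by (rule power_le_imp_le_exp[rotated]) (use card_subfield_ge_2[OF F] in simp)
  then show "a \<le> card A" using \<open>a = card B\<close> by simp
qed

lemma card_le_F_dim:
  fixes F :: "'k::{field,finite} set"
  assumes "B \<subseteq> W" "F_indep F B"
  shows "card B \<le> F_dim F W"
  unfolding F_dim_def by (rule Max_ge[OF finite_card_F_indep_subsets]) (use assms in blast)

lemma F_dim_attained:
  fixes F :: "'k::{field,finite} set"
  obtains B where "B \<subseteq> W" "F_indep F B" "card B = F_dim F W"
proof -
  have "card {} \<in> {card B |B. B \<subseteq> W \<and> F_indep F B}"
    by (auto intro!: exI[of _ "{}"] simp: F_indep_empty)
  then have "F_dim F W \<in> {card B |B. B \<subseteq> W \<and> F_indep F B}"
    unfolding F_dim_def by (intro Max_in finite_card_F_indep_subsets) blast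
  then obtain B where "B \<subseteq> W" "F_indep F B" "card B = F_dim F W" by auto
  then show ?thesis by (rule that)
qed

lemma F_indep_insert:
  assumes F: "is_subfield F" and D: "F_indep F D" and y: "y \<notin> F_span F D"
  shows "F_indep F (insert y D)"
  unfolding F_indep_def
proof (intro conjI allI impI)
  have "finite D" by (rule F_indep_finite[OF D])
  then show "finite (insert y D)" by simp
  have "y \<notin> D" using y F_span_superset[OF F] by blast
  fix c assume c: "\<forall>b\<in>insert y D. c b \<in> F" and "(\<Sum>b\<in>insert y D. c b * b) = 0"
  then have sum_D: "(\<Sum>b\<in>D. c b * b) = - (c y * y)"
    using \<open>finite D\<close> \<open>y \<notin> D\<close> by (simp add: eq_neg_iff_add_eq_0 add.commute)
  have "c y = 0"
  proof (rule ccontr)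
    assume "c y \<noteq> 0"
    have "(\<Sum>b\<in>D. (- c b / c y) * b) = (- 1 / c y) * (\<Sum>b\<in>D. c b * b)"
      by (simp add: sum_distrib_left)
    also have "\<dots> = y" using \<open>c y \<noteq> 0\<close> by (simp add: sum_D)
    finally have "y = (\<Sum>b\<in>D. (- c b / c y) * b)" ..
    moreover have "(\<Sum>b\<in>D. (- c b / c y) * b) \<in> F_span F D"
      using \<open>finite D\<close> c
      by (intro F_span_sum_mem ballI subfield_divide[OF F] subfield_uminus[OF F]) auto
    ultimately show False using y by simp
  qed
  then have "(\<Sum>b\<in>D. c b * b) = 0" using sum_D by simp
  then have "c b = 0" if "b \<in> D" for b
    using F_indepD[OF D, of c, OF _ _ that] c by blast
  with \<open>c y = 0\<close> show "\<forall>b\<in>insert y D. c b = 0" by blast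
qed

lemma subset_F_span_if_card_eq_F_dim:
  fixes F :: "'k::{field,finite} set"
  assumes F: "is_subfield F" and B: "B \<subseteq> W" "F_indep F B" "card B = F_dim F W"
  shows "W \<subseteq> F_span F B"
proof
  fix y assume "y \<in> W"
  show "y \<in> F_span F B"
  proof (rule ccontr)
    assume y: "y \<notin> F_span F B"
    then have "y \<notin> B" using F_span_superset[OF F] by blast
    have "card (insert y B) \<le> F_dim F W"
      using \<open>y \<in> W\<close> B(1) F_indep_insert[OF F B(2) y] by (intro card_le_F_dim) auto
    then show False using \<open>y \<notin> B\<close> B(3) F_indep_finite[OF B(2)] by simp
  qed
qed

lemma card_UNIV_eq_power_F_dim:
  fixes F :: "'k::{field,finite} set"
  assumes F: "is_subfield F"
  shows "CARD('k) = card F ^ F_dim F UNIV"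
proof -
  obtain D where D: "F_indep F D" "card D = F_dim F UNIV"
    using F_dim_attained by blast
  then have "F_span F D = UNIV"
    using subset_F_span_if_card_eq_F_dim[OF F _ D] by blast
  then show ?thesis using card_F_span_F_indep[OF F D(1)] D(2) by simp
qed

definition Fvec :: "'a set \<Rightarrow> ('a ^ 'n) set" where
  "Fvec F = {x. \<forall>i. x $ i \<in> F}"

lemma Fvec_diff: "is_subfield F \<Longrightarrow> x \<in> Fvec F \<Longrightarrow> y \<in> Fvec F \<Longrightarrow> x - y \<in> Fvec F"
  unfolding Fvec_def by (auto intro: subfield_diff)

lemma Fvec_scale: "is_subfield F \<Longrightarrow> c \<in> F \<Longrightarrow> x \<in> Fvec F \<Longrightarrow> c *s x \<in> Fvec F"
  unfolding Fvec_def by (auto intro: subfield_mult)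

lemma Fvec_sum: "is_subfield F \<Longrightarrow> (\<And>s. s \<in> S \<Longrightarrow> f s \<in> Fvec F) \<Longrightarrow> sum f S \<in> Fvec F"
  unfolding Fvec_def by (auto intro!: subfield_sum)

lemma Fvec_axis: "is_subfield F \<Longrightarrow> axis i 1 \<in> Fvec F"
  unfolding Fvec_def axis_def by (auto intro: subfield_zero subfield_one)

lemma scalar_product_commute:
  "scalar_product v (w :: 'a::comm_semiring_1 ^ 'n) = scalar_product w v"
  unfolding scalar_product_def by (simp add: mult.commute)

lemma scalar_product_diff_right:
  "scalar_product v (x - y :: 'a::comm_ring_1 ^ 'n) = scalar_product v x - scalar_product v y"
  unfolding scalar_product_def by (simp add: right_diff_distrib sum_subtractf)

lemma scalar_product_scale_right:
  "scalar_product v (c *s x :: 'a::comm_semiring_1 ^ 'n) = c * scalar_product v x"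
  unfolding scalar_product_def by (simp add: sum_distrib_left mult.left_commute)

lemma scalar_product_sum_right:
  "scalar_product v (sum f S :: 'a::comm_semiring_1 ^ 'n) = (\<Sum>s\<in>S. scalar_product v (f s))"
  unfolding scalar_product_def
  by (induct S rule: infinite_finite_induct) (simp_all add: sum.distrib distrib_left)

lemma scalar_product_axis_right:
  "scalar_product v (axis i 1 :: 'a::comm_semiring_1 ^ 'n) = v $ i"
  unfolding scalar_product_def axis_def by (simp add: if_distrib[of "\<lambda>x. _ * x"] cong: if_cong)

lemma scalar_product_in_subfield:
  "is_subfield F \<Longrightarrow> v \<in> Fvec F \<Longrightarrow> w \<in> Fvec F \<Longrightarrow> scalar_product v w \<in> F"
  unfolding scalar_product_def Fvec_def by (auto intro!: subfield_sum subfield_mult)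

definition F_dual_basis ::
  "'a set \<Rightarrow> ('a::semiring_1 ^ 'n) set \<Rightarrow> ('a ^ 'n \<Rightarrow> 'a ^ 'n) \<Rightarrow> bool" where
  "F_dual_basis F B A \<longleftrightarrow>
     (\<forall>b\<in>B. A b \<in> Fvec F \<and> (\<forall>b'\<in>B. scalar_product b' (A b) = (if b' = b then 1 else 0)))"

lemma exists_Fvec_separating:
  fixes B :: "('k::field ^ 'n) set"
  assumes F: "is_subfield F" and "finite B" and BF: "B \<subseteq> Fvec F" and A: "F_dual_basis F B A"
    and b0: "b0 \<in> Fvec F" "b0 \<notin> vec.span B"
  obtains a where "a \<in> Fvec F" "scalar_product b0 a = 1" "\<forall>b\<in>B. scalar_product b a = 0"
proof -
  \<comment> \<open>Each \<open>P i\<close> is orthogonal to \<open>B\<close>; if all were orthogonal to \<open>b0\<close>,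
    then \<open>b0\<close> would lie in the span of \<open>B\<close>.\<close>
  define P where "P i = axis i 1 - (\<Sum>b\<in>B. (b $ i) *s A b)" for i
  have P_Fvec: "P i \<in> Fvec F" for i
    unfolding P_def using BF A
    by (intro Fvec_diff[OF F] Fvec_axis[OF F] Fvec_sum[OF F] Fvec_scale[OF F])
      (auto simp: Fvec_def F_dual_basis_def)
  have scalar_product_P: "scalar_product v (P i) = v $ i - (\<Sum>b\<in>B. b $ i * scalar_product v (A b))"
    for v i
    unfolding P_def
    by (simp add: scalar_product_diff_right scalar_product_sum_right scalar_product_scale_right
        scalar_product_axis_right)
  have P_orth: "scalar_product b (P i) = 0" if "b \<in> B" for b i
  proof -
    have "(\<Sum>b'\<in>B. b' $ i * scalar_product b (A b')) = (\<Sum>b'\<in>B. if b = b' then b' $ i else 0)"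
      using A that by (intro sum.cong) (auto simp: F_dual_basis_def)
    then show ?thesis using that \<open>finite B\<close> by (simp add: scalar_product_P)
  qed
  have "\<exists>i. scalar_product b0 (P i) \<noteq> 0"
  proof (rule ccontr)
    assume "\<nexists>i. scalar_product b0 (P i) \<noteq> 0"
    then have "b0 $ i = (\<Sum>b\<in>B. scalar_product b0 (A b) *s b) $ i" for i
      using scalar_product_P[of b0 i] by (simp add: mult.commute)
    then have "b0 = (\<Sum>b\<in>B. scalar_product b0 (A b) *s b)" by (simp add: vec_eq_iff)
    moreover have "(\<Sum>b\<in>B. scalar_product b0 (A b) *s b) \<in> vec.span B"
      by (intro vec.span_sum vec.span_scale vec.span_base)
    ultimately show False using b0(2) by simp
  qed
  then obtain i where nz: "scalar_product b0 (P i) \<noteq> 0" by blast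
  show ?thesis
  proof (rule that)
    let ?a = "(1 / scalar_product b0 (P i)) *s P i"
    show "?a \<in> Fvec F" using P_Fvec b0(1)
      by (intro Fvec_scale[OF F] subfield_divide[OF F] subfield_one[OF F]
          scalar_product_in_subfield[OF F])
    show "scalar_product b0 ?a = 1" using nz by (simp add: scalar_product_scale_right)
    show "\<forall>b\<in>B. scalar_product b ?a = 0" by (simp add: scalar_product_scale_right P_orth)
  qed
qed

lemma F_dual_basis_insert:
  assumes F: "is_subfield F" and A: "F_dual_basis F B A" and "b0 \<in> Fvec F" "b0 \<notin> B"
    and a: "a \<in> Fvec F" "scalar_product b0 a = 1" "\<forall>b\<in>B. scalar_product b a = 0"
  shows "F_dual_basis F (insert b0 B)
           (\<lambda>b. if b = b0 then a else A b - scalar_product b0 (A b) *s a)"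
  using assms
  by (auto simp: F_dual_basis_def scalar_product_diff_right scalar_product_scale_right
      intro!: Fvec_diff Fvec_scale scalar_product_in_subfield)

lemma exists_F_dual_basis:
  fixes B :: "('k::field ^ 'n) set"
  assumes F: "is_subfield F" and "finite B"
  shows "B \<subseteq> Fvec F \<Longrightarrow> vec.independent B \<Longrightarrow> \<exists>A. F_dual_basis F B A"
  using \<open>finite B\<close>
proof (induct B rule: finite_induct)
  case empty
  show ?case by (simp add: F_dual_basis_def)
next
  case (insert b0 B)
  then have "vec.independent B" "b0 \<notin> vec.span B"
    using vec.independent_insert[of b0 B] by auto
  with insert obtain A where A: "F_dual_basis F B A" by auto
  obtain a where "a \<in> Fvec F" "scalar_product b0 a = 1" "\<forall>b\<in>B. scalar_product b a = 0"
    using exists_Fvec_separating[OF F \<open>finite B\<close> _ A _ \<open>b0 \<notin> vec.span B\<close>] insert.prems(1)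
    by auto
  then show ?case using F_dual_basis_insert[OF F A] insert by blast
qed

lemma rk_le_card:
  fixes F :: "'k::{field,finite} set"
  assumes F: "is_subfield F" and BF: "B \<subseteq> Fvec F" and x: "x \<in> vec.span B"
  shows "rk F x \<le> card B"
proof -
  have "finite B" by simp
  obtain u where x_eq: "x = (\<Sum>b\<in>B. u b *s b)"
    using x vec.span_finite[OF \<open>finite B\<close>] by auto
  have "x $ i \<in> F_span F (u ` B)" for i
  proof -
    have "x $ i = (\<Sum>b\<in>B. b $ i * u b)" by (simp add: x_eq mult.commute)
    also have "\<dots> \<in> F_span F (u ` B)"
      using BF \<open>finite B\<close> F_span_superset[OF F, of "u ` B"]
      by (intro F_span_lincomb[OF F]) (auto simp: Fvec_def)
    finally show ?thesis .
  qed
  then have "F_span F (range (\<lambda>i. x $ i)) \<subseteq> F_span F (u ` B)"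
    using \<open>finite B\<close> by (intro F_span_minimal[OF F]) auto
  then have "rk F x \<le> card (u ` B)"
    unfolding rk_def using \<open>finite B\<close> by (intro F_dim_le_card[OF F]) auto
  also have "\<dots> \<le> card B" by (rule card_image_le) simp
  finally show ?thesis .
qed

lemma card_le_rk:
  fixes F :: "'k::{field,finite} set"
  assumes F: "is_subfield F" and BF: "B \<subseteq> Fvec F" and indep: "vec.independent B"
    and c: "inj_on c B" "F_indep F (c ` B)"
  shows "card B \<le> rk F (\<Sum>b\<in>B. c b *s b)"
proof -
  let ?x = "\<Sum>b\<in>B. c b *s b"
  have "finite B" by simp
  obtain A where A: "F_dual_basis F B A"
    using exists_F_dual_basis[OF F \<open>finite B\<close> BF indep] by blast
  have "c b \<in> F_span F (range (\<lambda>i. ?x $ i))" if "b \<in> B" for b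
  proof -
    have "c b = (\<Sum>b'\<in>B. if b' = b then c b' else 0)" using that \<open>finite B\<close> by simp
    also have "\<dots> = (\<Sum>b'\<in>B. c b' * scalar_product b' (A b))"
      using A that by (intro sum.cong) (auto simp: F_dual_basis_def)
    also have "\<dots> = scalar_product (A b) ?x"
      by (simp add: scalar_product_sum_right scalar_product_scale_right scalar_product_commute)
    also have "\<dots> \<in> F_span F (range (\<lambda>i. ?x $ i))"
      unfolding scalar_product_def using A that F_span_superset[OF F, of "range (\<lambda>i. ?x $ i)"]
      by (intro F_span_lincomb[OF F]) (auto simp: F_dual_basis_def Fvec_def)
    finally show ?thesis .
  qed
  then have "card (c ` B) \<le> rk F ?x"
    unfolding rk_def by (intro card_le_F_dim[OF _ c(2)]) blast
  then show ?thesis using card_image[OF c(1)] by simp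
qed

theorem proposition2:
  fixes F :: "'k::{field,finite} set"
    and V :: "('k ^ 'n) set"
    and q m n v :: nat
  assumes q_pp: "\<exists>p k. prime p \<and> k > 0 \<and> q = p ^ k"
    and m_pos: "m > 0" and n_pos: "n > 0"
    and n_def: "CARD('n) = n"
    and K_card: "CARD('k) = q ^ m"
    and F_sub: "is_subfield F" and F_card: "card F = q"
    and v_le: "v \<le> n"
    and V_sub: "vec.subspace V"
    and V_elem: "elementary F V"
    and V_dim: "vec.dim V = v"
  shows "rank_diameter F V \<le> v \<and> (v \<le> m \<longrightarrow> rank_diameter F V = v)"
proof -
  obtain B where BF: "B \<subseteq> Fvec F" and indep: "vec.independent B" and V_eq: "V = vec.span B"
    using V_elem unfolding elementary_def Fvec_def by blast
  have card_B: "card B = v"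
    using vec.dim_span_eq_card_independent[OF indep] V_eq V_dim by simp
  have "0 \<in> V" unfolding V_eq by (rule vec.span_zero)
  then have "rank_diameter F V \<le> v"
    unfolding rank_diameter_def using rk_le_card[OF F_sub BF] V_eq card_B
    by (subst Max_le_iff) auto
  moreover have "v \<le> rank_diameter F V" if "v \<le> m"
  proof -
    have "F_dim F UNIV = m"
      using card_UNIV_eq_power_F_dim[OF F_sub] card_subfield_ge_2[OF F_sub] K_card F_card by simp
    then obtain D where D: "F_indep F D" "card D = m" using F_dim_attained by metis
    then obtain C where "C \<subseteq> D" "card C = v"
      using \<open>v \<le> m\<close> by (metis obtain_subset_with_card_n)
    moreover obtain c where "bij_betw c B C"
      using finite_same_card_bij[of B C] \<open>card C = v\<close> card_B F_indep_finite[OF D(1)] \<open>C \<subseteq> D\<close>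
      by (metis finite_subset finite)
    ultimately have "v \<le> rk F (\<Sum>b\<in>B. c b *s b)"
      using card_le_rk[OF F_sub BF indep] F_indep_subset[OF F_sub D(1)] card_B
      by (simp add: bij_betw_def)
    also have "\<dots> \<le> rank_diameter F V"
      unfolding rank_diameter_def V_eq
      by (intro Max_ge finite_imageI imageI vec.span_sum vec.span_scale vec.span_base) simp_all
    finally show ?thesis .
  qed
  ultimately show ?thesis by simp
qed

end
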